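(* Let $G$ be an $X-Y$ normalized graph, let $S \subseteq N(X)$, and assume that no vertex of $S$ is adjacent to a vertex of $Y$. Then there is exactly one important witness $K(S)$ of $S$.
   Context: $G$ is a finite undirected graph and $X,Y$ are disjoint subsets of $V(G)$; $N(C)=(\bigcup_{v\in C}N(v))\setminus C$. An $X-Y$ separator is a set $K \subseteq V(G) \setminus (X \cup Y)$ such that $G \setminus K$ has no path from $X$ to $Y$; minimal means inclusion-minimal. $G$ is $X-Y$ normalized if $N(X)$ is the only minimum-cardinality $X-Y$ separator. Let $r$ be the minimum size of an $X-Y$ separator; the excess of an $X-Y$ separator $K$ is $|K|-r$. For $S\subseteq N(X)$, the cover excess $CE(S)$ is the excess of a smallest $X-Y$ separator disjoint with $S$ (infinite if $S$ is adjacent to $Y$). An $X-Y$ separator $K$ with $K\cap S=\emptyset$ and excess $CE(S)$ is a witness of $S$. $NR(G,Y,K)$ is the set of vertices not reachable from $Y$ in $G\setminus K$; $K \geq K'$ means $NR(G,Y,K)\supseteq NR(G,Y,K')$, and $K'<K$ means $K\geq K'$ and $NR(G,Y,K)\ne NR(G,Y,K')$. A minimal $X-Y$ separator $K$ is important if there is no $X-Y$ separator $K'$ with $K<K'$ and $|K|\geq|K'|$. An important witness of $S$ is a witness of $S$ that is an important $X-Y$ separator. *)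

theory Defs
  imports Main "HOL-Library.Extended_Nat"
begin

definition fin_graph :: "'a set \<Rightarrow> ('a \<Rightarrow> 'a \<Rightarrow> bool) \<Rightarrow> bool" where
  "fin_graph V E \<longleftrightarrow> finite V \<and> (\<forall>u v. E u v \<longrightarrow> E v u) \<and> (\<forall>v. \<not> E v v)
     \<and> (\<forall>u v. E u v \<longrightarrow> u \<in> V \<and> v \<in> V)"

definition nbh :: "'a set \<Rightarrow> ('a \<Rightarrow> 'a \<Rightarrow> bool) \<Rightarrow> 'a set \<Rightarrow> 'a set" where
  "nbh V E C = {w \<in> V. \<exists>v\<in>C. E v w} - C"

definition edges_minus :: "'a set \<Rightarrow> ('a \<Rightarrow> 'a \<Rightarrow> bool) \<Rightarrow> 'a set \<Rightarrow> ('a \<times> 'a) set" where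
  "edges_minus V E K = {(u, v). u \<in> V - K \<and> v \<in> V - K \<and> E u v}"

definition is_sep :: "'a set \<Rightarrow> ('a \<Rightarrow> 'a \<Rightarrow> bool) \<Rightarrow> 'a set \<Rightarrow> 'a set \<Rightarrow> 'a set \<Rightarrow> bool" where
  "is_sep V E X Y K \<longleftrightarrow> K \<subseteq> V - (X \<union> Y) \<and>
     \<not> (\<exists>x\<in>X. \<exists>y\<in>Y. (x, y) \<in> (edges_minus V E K)\<^sup>*)"

definition min_sep_size :: "'a set \<Rightarrow> ('a \<Rightarrow> 'a \<Rightarrow> bool) \<Rightarrow> 'a set \<Rightarrow> 'a set \<Rightarrow> nat" where
  "min_sep_size V E X Y = (LEAST n. \<exists>K. is_sep V E X Y K \<and> card K = n)"

definition excess :: "'a set \<Rightarrow> ('a \<Rightarrow> 'a \<Rightarrow> bool) \<Rightarrow> 'a set \<Rightarrow> 'a set \<Rightarrow> 'a set \<Rightarrow> nat" where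
  "excess V E X Y K = card K - min_sep_size V E X Y"

definition normalized :: "'a set \<Rightarrow> ('a \<Rightarrow> 'a \<Rightarrow> bool) \<Rightarrow> 'a set \<Rightarrow> 'a set \<Rightarrow> bool" where
  "normalized V E X Y \<longleftrightarrow>
     is_sep V E X Y (nbh V E X) \<and> card (nbh V E X) = min_sep_size V E X Y \<and>
     (\<forall>K. is_sep V E X Y K \<and> card K = min_sep_size V E X Y \<longrightarrow> K = nbh V E X)"

text \<open>Cover excess: excess of a smallest separator disjoint with S; infinite if none exists
  (which happens exactly when S is adjacent to Y).\<close>
definition cover_excess :: "'a set \<Rightarrow> ('a \<Rightarrow> 'a \<Rightarrow> bool) \<Rightarrow> 'a set \<Rightarrow> 'a set \<Rightarrow> 'a set \<Rightarrow> enat" where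
  "cover_excess V E X Y S =
     (if \<exists>K. is_sep V E X Y K \<and> K \<inter> S = {}
      then enat (LEAST e. \<exists>K. is_sep V E X Y K \<and> K \<inter> S = {} \<and> excess V E X Y K = e)
      else \<infinity>)"

definition is_witness :: "'a set \<Rightarrow> ('a \<Rightarrow> 'a \<Rightarrow> bool) \<Rightarrow> 'a set \<Rightarrow> 'a set \<Rightarrow> 'a set \<Rightarrow> 'a set \<Rightarrow> bool" where
  "is_witness V E X Y S K \<longleftrightarrow> is_sep V E X Y K \<and> K \<inter> S = {} \<and>
     enat (excess V E X Y K) = cover_excess V E X Y S"

definition NR :: "'a set \<Rightarrow> ('a \<Rightarrow> 'a \<Rightarrow> bool) \<Rightarrow> 'a set \<Rightarrow> 'a set \<Rightarrow> 'a set" where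
  "NR V E Y K = V - {v. \<exists>y\<in>Y - K. y \<in> V \<and> (y, v) \<in> (edges_minus V E K)\<^sup>*}"

definition sep_ge :: "'a set \<Rightarrow> ('a \<Rightarrow> 'a \<Rightarrow> bool) \<Rightarrow> 'a set \<Rightarrow> 'a set \<Rightarrow> 'a set \<Rightarrow> bool" where
  "sep_ge V E Y K K' \<longleftrightarrow> NR V E Y K' \<subseteq> NR V E Y K"

definition sep_less :: "'a set \<Rightarrow> ('a \<Rightarrow> 'a \<Rightarrow> bool) \<Rightarrow> 'a set \<Rightarrow> 'a set \<Rightarrow> 'a set \<Rightarrow> bool" where
  "sep_less V E Y K' K \<longleftrightarrow> sep_ge V E Y K K' \<and> NR V E Y K \<noteq> NR V E Y K'"

definition minimal_sep :: "'a set \<Rightarrow> ('a \<Rightarrow> 'a \<Rightarrow> bool) \<Rightarrow> 'a set \<Rightarrow> 'a set \<Rightarrow> 'a set \<Rightarrow> bool" where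
  "minimal_sep V E X Y K \<longleftrightarrow> is_sep V E X Y K \<and> (\<forall>K'. K' \<subset> K \<longrightarrow> \<not> is_sep V E X Y K')"

definition important_sep :: "'a set \<Rightarrow> ('a \<Rightarrow> 'a \<Rightarrow> bool) \<Rightarrow> 'a set \<Rightarrow> 'a set \<Rightarrow> 'a set \<Rightarrow> bool" where
  "important_sep V E X Y K \<longleftrightarrow> minimal_sep V E X Y K \<and>
     \<not> (\<exists>K'. is_sep V E X Y K' \<and> sep_less V E Y K K' \<and> card K \<ge> card K')"

definition important_witness :: "'a set \<Rightarrow> ('a \<Rightarrow> 'a \<Rightarrow> bool) \<Rightarrow> 'a set \<Rightarrow> 'a set \<Rightarrow> 'a set \<Rightarrow> 'a set \<Rightarrow> bool" where
  "important_witness V E X Y S K \<longleftrightarrow> is_witness V E X Y S K \<and> important_sep V E X Y K"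

end

theory Submission
  imports Defs
begin

text \<open>
  Every separator K may be replaced by the inner boundary of the region NR(K) it cuts off, which
  is again a separator, is contained in K and cuts off the same region. The inner boundary is
  submodular in the region, so the union of the regions of two minimum S-avoiding separators is
  cut off by a minimum S-avoiding separator as well. Hence, among the witnesses of S (which, as S
  can be avoided, are exactly the minimum S-avoiding separators), the one with the largest region
  contains the regions of all others. It is important: a separator strictly beyond it that is not
  larger would either avoid S, contradicting maximality, or contain a vertex of S on its boundary;
  but S lies in the region of every S-avoiding separator, since S \<subseteq> N(X). Any other important
  witness has a region inside the largest one, so it must have the same region and hence equals it.
\<close>

definition inner_boundary :: "'a set \<Rightarrow> ('a \<Rightarrow> 'a \<Rightarrow> bool) \<Rightarrow> 'a set \<Rightarrow> 'a set" where
  "inner_boundary V E A = {v \<in> A. \<exists>u \<in> V - A. E v u}"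

definition min_avoiding_sep ::
    "'a set \<Rightarrow> ('a \<Rightarrow> 'a \<Rightarrow> bool) \<Rightarrow> 'a set \<Rightarrow> 'a set \<Rightarrow> 'a set \<Rightarrow> 'a set \<Rightarrow> bool" where
  "min_avoiding_sep V E X Y S K \<longleftrightarrow> is_sep V E X Y K \<and> K \<inter> S = {} \<and>
     (\<forall>K'. is_sep V E X Y K' \<and> K' \<inter> S = {} \<longrightarrow> card K \<le> card K')"

lemma card_inner_boundary_submodular:
  assumes "finite A" "finite B"
  shows "card (inner_boundary V E (A \<inter> B)) + card (inner_boundary V E (A \<union> B))
           \<le> card (inner_boundary V E A) + card (inner_boundary V E B)"
proof -
  let ?b = "inner_boundary V E"
  have "?b C \<subseteq> C" for C
    by (auto simp: inner_boundary_def)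
  then have fin: "finite (?b (A \<inter> B))" "finite (?b (A \<union> B))" "finite (?b A)" "finite (?b B)"
    using assms by (meson finite_Int finite_UnI rev_finite_subset)+
  have "card (?b (A \<inter> B)) + card (?b (A \<union> B))
      = card (?b (A \<inter> B) \<union> ?b (A \<union> B)) + card (?b (A \<inter> B) \<inter> ?b (A \<union> B))"
    using card_Un_Int fin(1,2) by blast
  also have "\<dots> \<le> card (?b A \<union> ?b B) + card (?b A \<inter> ?b B)"
    using fin(3,4) by (intro add_mono card_mono) (auto simp: inner_boundary_def)
  also have "\<dots> = card (?b A) + card (?b B)"
    using card_Un_Int fin(3,4) by metis
  finally show ?thesis .
qed

locale xy_graph =
  fixes V :: "'a set" and E :: "'a \<Rightarrow> 'a \<Rightarrow> bool" and X Y :: "'a set"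
  assumes fin_graph: "fin_graph V E"
    and X_subset: "X \<subseteq> V" and Y_subset: "Y \<subseteq> V" and X_Y_disjoint: "X \<inter> Y = {}"
begin

lemma finite_V: "finite V"
  using fin_graph by (simp add: fin_graph_def)

lemma E_sym: "E u v \<Longrightarrow> E v u"
  using fin_graph by (simp add: fin_graph_def)

lemma E_in_V: "E u v \<Longrightarrow> u \<in> V \<and> v \<in> V"
  using fin_graph by (simp add: fin_graph_def)

lemma rtrancl_edges_minus_sym:
  "(u, v) \<in> (edges_minus V E K)\<^sup>* \<Longrightarrow> (v, u) \<in> (edges_minus V E K)\<^sup>*"
proof (induction rule: rtrancl_induct)
  case (step a b)
  then have "(b, a) \<in> edges_minus V E K"
    by (auto simp: edges_minus_def E_sym)
  then show ?case
    using step.IH by (rule converse_rtrancl_into_rtrancl)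
qed simp

lemma reachable_outside_cut:
  assumes "Y \<inter> C = {}" and cut: "\<And>u v. E u v \<Longrightarrow> u \<notin> C \<Longrightarrow> v \<in> C \<Longrightarrow> u \<in> K \<or> v \<in> K"
    and "y \<in> Y" and "(y, v) \<in> (edges_minus V E K)\<^sup>*"
  shows "v \<notin> C"
  using assms(4)
proof (induction rule: rtrancl_induct)
  case base
  then show ?case using assms(1,3) by auto
next
  case (step a b)
  then show ?case using cut by (auto simp: edges_minus_def)
qed

lemma is_sep_if_cut:
  assumes "Y \<inter> C = {}" "X \<subseteq> C"
    and "\<And>u v. E u v \<Longrightarrow> u \<notin> C \<Longrightarrow> v \<in> C \<Longrightarrow> u \<in> K \<or> v \<in> K"
    and "K \<subseteq> V - (X \<union> Y)"
  shows "is_sep V E X Y K"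
  using reachable_outside_cut[OF assms(1,3)] rtrancl_edges_minus_sym assms(2,4)
  unfolding is_sep_def by blast

lemma subset_NR_if_cut:
  assumes "Y \<inter> C = {}"
    and "\<And>u v. E u v \<Longrightarrow> u \<notin> C \<Longrightarrow> v \<in> C \<Longrightarrow> u \<in> K \<or> v \<in> K"
  shows "C \<inter> V \<subseteq> NR V E Y K"
  using reachable_outside_cut[OF assms] unfolding NR_def by blast

lemma inner_boundary_cuts:
  "E u v \<Longrightarrow> u \<notin> C \<Longrightarrow> v \<in> C \<Longrightarrow> u \<in> inner_boundary V E C \<or> v \<in> inner_boundary V E C"
  by (auto simp: inner_boundary_def dest: E_in_V E_sym)

lemma is_sep_subset_V: "is_sep V E X Y K \<Longrightarrow> K \<subseteq> V"
  by (auto simp: is_sep_def)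

lemma NR_subset_V: "NR V E Y K \<subseteq> V"
  by (auto simp: NR_def)

lemma finite_NR: "finite (NR V E Y K)"
  using finite_V NR_subset_V by (rule rev_finite_subset)

lemma subset_NR: "K \<subseteq> V \<Longrightarrow> K \<subseteq> NR V E Y K"
  by (auto simp: NR_def edges_minus_def elim: rtranclE)

lemma Y_disjoint_NR: "is_sep V E X Y K \<Longrightarrow> Y \<inter> NR V E Y K = {}"
  using Y_subset unfolding NR_def is_sep_def by blast

lemma X_subset_NR: "is_sep V E X Y K \<Longrightarrow> X \<subseteq> NR V E Y K"
  using X_subset rtrancl_edges_minus_sym unfolding NR_def is_sep_def by blast

lemma NR_mono:
  assumes "K1 \<subseteq> K2" "Y \<inter> K2 = {}"
  shows "NR V E Y K1 \<subseteq> NR V E Y K2"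
proof -
  have "edges_minus V E K2 \<subseteq> edges_minus V E K1"
    using assms(1) by (auto simp: edges_minus_def)
  then have "(edges_minus V E K2)\<^sup>* \<subseteq> (edges_minus V E K1)\<^sup>*"
    by (rule rtrancl_mono)
  then show ?thesis
    using assms unfolding NR_def by blast
qed

lemma neighbour_notin_NR:
  assumes "K \<subseteq> V" "u \<in> V" "u \<notin> NR V E Y K" "E u v" "v \<notin> K"
  shows "v \<notin> NR V E Y K"
proof -
  from assms(2,3) obtain y where y: "y \<in> Y - K" "y \<in> V" "(y, u) \<in> (edges_minus V E K)\<^sup>*"
    by (auto simp: NR_def)
  have "u \<notin> K"
    using subset_NR[OF assms(1)] assms(3) by blast
  then have "(u, v) \<in> edges_minus V E K"
    using assms(4,5) E_in_V[OF assms(4)] by (auto simp: edges_minus_def)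
  with y show ?thesis
    by (auto simp: NR_def)
qed

lemma inner_boundary_NR_subset: "K \<subseteq> V \<Longrightarrow> inner_boundary V E (NR V E Y K) \<subseteq> K"
  using neighbour_notin_NR E_sym unfolding inner_boundary_def by blast

lemma inner_boundary_is_sep:
  assumes "X \<subseteq> C" "Y \<inter> C = {}" "X \<inter> inner_boundary V E C = {}"
  shows "is_sep V E X Y (inner_boundary V E C)"
proof (rule is_sep_if_cut[OF assms(2,1) inner_boundary_cuts])
  show "inner_boundary V E C \<subseteq> V - (X \<union> Y)"
    using assms by (auto simp: inner_boundary_def dest: E_in_V)
qed

lemma subset_NR_inner_boundary:
  "Y \<inter> C = {} \<Longrightarrow> C \<inter> V \<subseteq> NR V E Y (inner_boundary V E C)"
  using subset_NR_if_cut inner_boundary_cuts by blast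

lemma inner_boundary_NR_is_sep:
  assumes "is_sep V E X Y K"
  shows "is_sep V E X Y (inner_boundary V E (NR V E Y K))"
    and "NR V E Y (inner_boundary V E (NR V E Y K)) = NR V E Y K"
proof -
  have sub: "inner_boundary V E (NR V E Y K) \<subseteq> K"
    using inner_boundary_NR_subset is_sep_subset_V[OF assms] .
  have "X \<inter> inner_boundary V E (NR V E Y K) = {}"
    using sub assms by (auto simp: is_sep_def)
  then show "is_sep V E X Y (inner_boundary V E (NR V E Y K))"
    using inner_boundary_is_sep X_subset_NR[OF assms] Y_disjoint_NR[OF assms] by blast
  have "NR V E Y K \<subseteq> NR V E Y (inner_boundary V E (NR V E Y K))"
    using subset_NR_inner_boundary[OF Y_disjoint_NR[OF assms]] NR_subset_V by blast
  moreover have "NR V E Y (inner_boundary V E (NR V E Y K)) \<subseteq> NR V E Y K"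
    using NR_mono[OF sub] assms by (auto simp: is_sep_def)
  ultimately show "NR V E Y (inner_boundary V E (NR V E Y K)) = NR V E Y K"
    by blast
qed

lemma card_min_sep_size_le: "is_sep V E X Y K \<Longrightarrow> min_sep_size V E X Y \<le> card K"
  unfolding min_sep_size_def by (rule Least_le) blast

lemma is_witness_iff_min_avoiding_sep:
  assumes "\<exists>K0. is_sep V E X Y K0 \<and> K0 \<inter> S = {}"
  shows "is_witness V E X Y S K \<longleftrightarrow> min_avoiding_sep V E X Y S K"
proof -
  define A where "A K \<longleftrightarrow> is_sep V E X Y K \<and> K \<inter> S = {}" for K
  have exc_le_iff: "excess V E X Y K1 \<le> excess V E X Y K2 \<longleftrightarrow> card K1 \<le> card K2"
    if "A K1" "A K2" for K1 K2
    using card_min_sep_size_le that unfolding A_def excess_def by fastforce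
  define e where "e = (LEAST e. \<exists>K. A K \<and> excess V E X Y K = e)"
  have ce: "cover_excess V E X Y S = enat e"
    using assms by (simp add: cover_excess_def e_def A_def)
  have e_le: "A K \<Longrightarrow> e \<le> excess V E X Y K" for K
    unfolding e_def by (rule Least_le) blast
  obtain K0 where "A K0" "excess V E X Y K0 = e"
    using LeastI_ex[of "\<lambda>e. \<exists>K. A K \<and> excess V E X Y K = e"] assms
    unfolding e_def A_def by blast
  then have "A K \<Longrightarrow> excess V E X Y K = e \<longleftrightarrow> (\<forall>K'. A K' \<longrightarrow> card K \<le> card K')" for K
    using e_le exc_le_iff by (metis le_antisym)
  then show ?thesis
    unfolding is_witness_def min_avoiding_sep_def ce A_def by auto
qed

lemma min_avoiding_sep_exists:
  assumes "is_sep V E X Y K0" "K0 \<inter> S = {}"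
  shows "\<exists>K. min_avoiding_sep V E X Y S K"
  using ex_has_least_nat[of "\<lambda>K. is_sep V E X Y K \<and> K \<inter> S = {}" K0 card] assms
  unfolding min_avoiding_sep_def by blast

lemma minimal_sep_if_min_avoiding_sep:
  assumes "min_avoiding_sep V E X Y S K"
  shows "minimal_sep V E X Y K"
  unfolding minimal_sep_def
proof (intro conjI allI impI notI)
  show sep: "is_sep V E X Y K"
    using assms by (simp add: min_avoiding_sep_def)
  fix K' assume K': "K' \<subset> K" "is_sep V E X Y K'"
  then have "card K \<le> card K'"
    using assms unfolding min_avoiding_sep_def by blast
  moreover have "card K' < card K"
    using finite_V is_sep_subset_V[OF sep] K'(1) by (meson psubset_card_mono rev_finite_subset)
  ultimately show False
    by simp
qed

lemma inner_boundary_NR_min_avoiding_sep: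
  assumes "min_avoiding_sep V E X Y S K"
  shows "inner_boundary V E (NR V E Y K) = K"
proof -
  have sep: "is_sep V E X Y K"
    using assms by (simp add: min_avoiding_sep_def)
  have sub: "inner_boundary V E (NR V E Y K) \<subseteq> K"
    using inner_boundary_NR_subset is_sep_subset_V[OF sep] .
  then have "card K \<le> card (inner_boundary V E (NR V E Y K))"
    using assms inner_boundary_NR_is_sep(1)[OF sep] unfolding min_avoiding_sep_def by blast
  moreover have "finite K"
    using finite_V is_sep_subset_V[OF sep] by (rule rev_finite_subset)
  ultimately show ?thesis
    using card_seteq[OF _ sub] by blast
qed

lemma min_avoiding_sep_union:
  assumes K1: "min_avoiding_sep V E X Y S K1" and K2: "min_avoiding_sep V E X Y S K2"
  defines "U \<equiv> NR V E Y K1 \<union> NR V E Y K2"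
  shows "min_avoiding_sep V E X Y S (inner_boundary V E U)"
    and "U \<subseteq> NR V E Y (inner_boundary V E U)"
proof -
  let ?A = "NR V E Y K1" and ?B = "NR V E Y K2"
  have seps: "is_sep V E X Y K1" "is_sep V E X Y K2" and avoid: "K1 \<inter> S = {}" "K2 \<inter> S = {}"
    using K1 K2 by (auto simp: min_avoiding_sep_def)
  have bA: "inner_boundary V E ?A = K1" and bB: "inner_boundary V E ?B = K2"
    using inner_boundary_NR_min_avoiding_sep K1 K2 by blast+
  have X_in: "X \<subseteq> ?A" "X \<subseteq> ?B" and Y_out: "Y \<inter> ?A = {}" "Y \<inter> ?B = {}"
    using X_subset_NR Y_disjoint_NR seps by blast+
  have X_out: "X \<inter> K1 = {}" "X \<inter> K2 = {}"
    using seps by (auto simp: is_sep_def)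
  have avoiding: "is_sep V E X Y (inner_boundary V E C) \<and> inner_boundary V E C \<inter> S = {}"
    if C: "C = ?A \<inter> ?B \<or> C = ?A \<union> ?B" for C
  proof
    have "inner_boundary V E C \<subseteq> inner_boundary V E ?A \<union> inner_boundary V E ?B"
      using C by (auto simp: inner_boundary_def)
    then have b_sub: "inner_boundary V E C \<subseteq> K1 \<union> K2"
      by (simp only: bA bB)
    have "X \<subseteq> C" "Y \<inter> C = {}"
      using C X_in Y_out by blast+
    moreover have "X \<inter> inner_boundary V E C = {}"
      using b_sub X_out by blast
    ultimately show "is_sep V E X Y (inner_boundary V E C)"
      by (rule inner_boundary_is_sep)
    show "inner_boundary V E C \<inter> S = {}"
      using b_sub avoid by blast
  qed
  have "card K1 \<le> card (inner_boundary V E (?A \<inter> ?B))"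
    using K1 avoiding unfolding min_avoiding_sep_def by blast
  moreover have "card K2 \<le> card K1"
    using K2 seps(1) avoid(1) unfolding min_avoiding_sep_def by blast
  moreover have "card (inner_boundary V E (?A \<inter> ?B)) + card (inner_boundary V E U) \<le> card K1 + card K2"
    using card_inner_boundary_submodular[of ?A ?B V E] finite_NR bA bB unfolding U_def by simp
  ultimately have "card (inner_boundary V E U) \<le> card K1"
    by linarith
  moreover have "card K1 \<le> card K'" if "is_sep V E X Y K'" "K' \<inter> S = {}" for K'
    using K1 that unfolding min_avoiding_sep_def by blast
  ultimately show "min_avoiding_sep V E X Y S (inner_boundary V E U)"
    using avoiding[of U] unfolding min_avoiding_sep_def U_def by (meson order_trans)
  show "U \<subseteq> NR V E Y (inner_boundary V E U)"
    using subset_NR_inner_boundary[of U] Y_out NR_subset_V unfolding U_def by blast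
qed

lemma min_avoiding_sep_greatest_exists:
  assumes "min_avoiding_sep V E X Y S K0"
  shows "\<exists>Ks. min_avoiding_sep V E X Y S Ks \<and>
           (\<forall>K. min_avoiding_sep V E X Y S K \<longrightarrow> NR V E Y K \<subseteq> NR V E Y Ks)"
proof -
  let ?M = "min_avoiding_sep V E X Y S"
  have "\<forall>K. ?M K \<longrightarrow> card (NR V E Y K) < Suc (card V)"
    using card_mono[OF finite_V NR_subset_V] by (simp add: le_imp_less_Suc)
  then obtain Ks where Ks: "?M Ks"
    and largest: "\<And>K. ?M K \<Longrightarrow> card (NR V E Y K) \<le> card (NR V E Y Ks)"
    using ex_has_greatest_nat[of ?M K0 "\<lambda>K. card (NR V E Y K)"] assms by blast
  have "NR V E Y K \<subseteq> NR V E Y Ks" if K: "?M K" for K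
  proof -
    let ?U = "NR V E Y K \<union> NR V E Y Ks"
    have "?U \<subseteq> NR V E Y (inner_boundary V E ?U)"
      and "card (NR V E Y (inner_boundary V E ?U)) \<le> card (NR V E Y Ks)"
      using min_avoiding_sep_union[OF K Ks] largest by blast+
    then have "NR V E Y (inner_boundary V E ?U) = NR V E Y Ks"
      using card_seteq[OF finite_NR] by blast
    with \<open>?U \<subseteq> _\<close> show ?thesis
      by blast
  qed
  with Ks show ?thesis
    by blast
qed

lemma S_subset_NR:
  assumes "S \<subseteq> nbh V E X" "is_sep V E X Y K" "K \<inter> S = {}"
  shows "S \<subseteq> NR V E Y K"
proof
  fix s assume "s \<in> S"
  then obtain x where x: "x \<in> X" "E x s" "s \<notin> K"
    using assms(1,3) by (auto simp: nbh_def)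
  have "x \<in> NR V E Y K" "x \<notin> K"
    using X_subset_NR[OF assms(2)] x(1) assms(2) by (auto simp: is_sep_def)
  then show "s \<in> NR V E Y K"
    using neighbour_notin_NR[OF is_sep_subset_V[OF assms(2)] _ _ E_sym[OF x(2)]] E_in_V[OF x(2)]
    by blast
qed

lemma important_sep_if_greatest:
  assumes S: "S \<subseteq> nbh V E X" and Ks: "min_avoiding_sep V E X Y S Ks"
    and greatest: "\<And>K. min_avoiding_sep V E X Y S K \<Longrightarrow> NR V E Y K \<subseteq> NR V E Y Ks"
  shows "important_sep V E X Y Ks"
  unfolding important_sep_def
proof (intro conjI notI)
  show "minimal_sep V E X Y Ks"
    using minimal_sep_if_min_avoiding_sep[OF Ks] .
  assume "\<exists>K'. is_sep V E X Y K' \<and> sep_less V E Y Ks K' \<and> card K' \<le> card Ks"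
  then obtain K' where K': "is_sep V E X Y K'" "card K' \<le> card Ks"
    and beyond: "NR V E Y Ks \<subseteq> NR V E Y K'" "NR V E Y K' \<noteq> NR V E Y Ks"
    unfolding sep_less_def sep_ge_def by blast
  define K2 where "K2 = inner_boundary V E (NR V E Y K')"
  have K2: "is_sep V E X Y K2" "NR V E Y K2 = NR V E Y K'"
    using inner_boundary_NR_is_sep[OF K'(1)] unfolding K2_def by blast+
  have "K2 \<subseteq> K'"
    unfolding K2_def using inner_boundary_NR_subset is_sep_subset_V[OF K'(1)] .
  moreover have "finite K'"
    using finite_V is_sep_subset_V[OF K'(1)] by (rule rev_finite_subset)
  ultimately have card_K2: "card K2 \<le> card Ks"
    using card_mono K'(2) by (meson order_trans)
  show False
  proof (cases "K2 \<inter> S = {}")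
    case True
    have "card Ks \<le> card K''" if "is_sep V E X Y K''" "K'' \<inter> S = {}" for K''
      using Ks that unfolding min_avoiding_sep_def by blast
    then have "min_avoiding_sep V E X Y S K2"
      using K2(1) True card_K2 unfolding min_avoiding_sep_def by (meson order_trans)
    then have "NR V E Y K' \<subseteq> NR V E Y Ks"
      using greatest K2(2) by metis
    then show False
      using beyond by blast
  next
    case False
    then obtain s where s: "s \<in> S" "s \<in> K2"
      by blast
    then obtain u where u: "u \<in> V" "u \<notin> NR V E Y K'" "E s u"
      unfolding K2_def inner_boundary_def by blast
    have "s \<in> NR V E Y Ks"
      using S_subset_NR[OF S] Ks s(1) unfolding min_avoiding_sep_def by blast
    with u beyond(1) have "s \<in> inner_boundary V E (NR V E Y Ks)"
      unfolding inner_boundary_def by blast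
    then have "s \<in> Ks"
      by (simp only: inner_boundary_NR_min_avoiding_sep[OF Ks])
    then show False
      using Ks s(1) unfolding min_avoiding_sep_def by blast
  qed
qed

lemma important_min_avoiding_sep_unique:
  assumes K: "min_avoiding_sep V E X Y S K" "important_sep V E X Y K"
    and Ks: "min_avoiding_sep V E X Y S Ks" and sub: "NR V E Y K \<subseteq> NR V E Y Ks"
  shows "K = Ks"
proof -
  have "card Ks \<le> card K" "is_sep V E X Y Ks"
    using K(1) Ks unfolding min_avoiding_sep_def by blast+
  then have "\<not> sep_less V E Y K Ks"
    using K(2) unfolding important_sep_def by blast
  then have "NR V E Y K = NR V E Y Ks"
    using sub unfolding sep_less_def sep_ge_def by blast
  then show ?thesis
    using inner_boundary_NR_min_avoiding_sep K(1) Ks by metis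
qed

lemma avoiding_sep_exists:
  assumes "is_sep V E X Y (nbh V E X)" "S \<subseteq> nbh V E X" "\<forall>s\<in>S. \<forall>y\<in>Y. \<not> E s y"
  shows "is_sep V E X Y (nbh V E (X \<union> S)) \<and> nbh V E (X \<union> S) \<inter> S = {}"
proof -
  have "Y \<inter> nbh V E X = {}"
    using assms(1) by (auto simp: is_sep_def)
  then have "nbh V E (X \<union> S) \<subseteq> V - (X \<union> Y)"
    using assms(3) by (auto simp: nbh_def)
  moreover have "Y \<inter> (X \<union> S) = {}"
    using \<open>Y \<inter> nbh V E X = {}\<close> assms(2) X_Y_disjoint by blast
  moreover have "u \<in> nbh V E (X \<union> S) \<or> v \<in> nbh V E (X \<union> S)"
    if "E u v" "u \<notin> X \<union> S" "v \<in> X \<union> S" for u v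
    using that E_in_V E_sym unfolding nbh_def by blast
  ultimately show ?thesis
    using is_sep_if_cut[of "X \<union> S"] unfolding nbh_def by blast
qed

end

theorem lemma2:
  fixes V :: "'a set" and E :: "'a \<Rightarrow> 'a \<Rightarrow> bool" and X Y S :: "'a set"
  assumes "fin_graph V E"
    and "X \<subseteq> V" and "Y \<subseteq> V" and "X \<inter> Y = {}"
    and "normalized V E X Y"
    and "S \<subseteq> nbh V E X"
    and "\<forall>s\<in>S. \<forall>y\<in>Y. \<not> E s y"
  shows "\<exists>!K. important_witness V E X Y S K"
proof -
  interpret xy_graph V E X Y
    using assms(1-4) by unfold_locales
  have avoidable: "\<exists>K0. is_sep V E X Y K0 \<and> K0 \<inter> S = {}"
    using avoiding_sep_exists assms(5-7) unfolding normalized_def by blast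
  then obtain Ks where Ks: "min_avoiding_sep V E X Y S Ks"
    and greatest: "\<And>K. min_avoiding_sep V E X Y S K \<Longrightarrow> NR V E Y K \<subseteq> NR V E Y Ks"
    using min_avoiding_sep_exists min_avoiding_sep_greatest_exists by metis
  have witness: "important_witness V E X Y S K \<longleftrightarrow>
                   min_avoiding_sep V E X Y S K \<and> important_sep V E X Y K" for K
    using is_witness_iff_min_avoiding_sep[OF avoidable] unfolding important_witness_def by blast
  show ?thesis
  proof (rule ex1I)
    show "important_witness V E X Y S Ks"
      using witness important_sep_if_greatest[OF assms(6) Ks greatest] Ks by blast
  next
    show "important_witness V E X Y S K \<Longrightarrow> K = Ks" for K
      using witness important_min_avoiding_sep_unique Ks greatest by blast
  qed
qed

end
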